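(* Let $n\ge2$ and consider an equation $\sum_{i,j=1}^n f_{ij}({\bf p})u_{x_ix_j}=0$, ${\bf p}=(p^1,\dots,p^n)$, $p^i=u_{x_i}$, with $(f_{ij})$ symmetric and nondegenerate. The equation is linearizable by a transformation from the equivalence group $SL(n+1,\mathbb{R})$ if and only if there exist a covector $s_k({\bf p})$ such that the connection $\nabla$ with Christoffel symbols $\Gamma^i_{jk}=s_j\delta^i_k+s_k\delta^i_j$ is flat (zero curvature), and a covector $c_k({\bf p})$, such that $\nabla_kf_{ij}=c_kf_{ij}$.
   Context: The equivalence group consists of transformations $\tilde{\bf x}=C{\bf x}+bu$, $\tilde u=c{\bf x}+\beta u$ with the corresponding $(n+1)\times(n+1)$ matrix in $SL(n+1,\mathbb{R})$; they act on the row vector ${\bf p}$ projectively by $\tilde{\bf p}=\kappa{\bf p}C^{-1}+cC^{-1}$, $\kappa=1/\det(C+b{\bf p})$, and on $F=(f_{ij})$ by $\tilde F=\kappa^{-1}(C+b{\bf p})F(C+b{\bf p})^t$. Linearizable means that the transformed coefficient matrix is proportional (by a function) to a constant matrix. Here $\nabla_kf_{ij}=\partial_kf_{ij}-\Gamma^m_{ki}f_{mj}-\Gamma^m_{kj}f_{im}$ with $\partial_k=\partial/\partial p^k$. *)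

theory Defs
  imports "HOL-Analysis.Analysis"
begin

definition pd :: "'n::finite \<Rightarrow> (real^'n \<Rightarrow> real) \<Rightarrow> real^'n \<Rightarrow> real" where
  "pd k f p = frechet_derivative f (at p) (axis k 1)"

fun iter_pd :: "'n::finite list \<Rightarrow> (real^'n \<Rightarrow> real) \<Rightarrow> real^'n \<Rightarrow> real" where
  "iter_pd [] f = f"
| "iter_pd (k # ks) f = pd k (iter_pd ks f)"

definition smooth_fun_on :: "(real^'n::finite \<Rightarrow> real) \<Rightarrow> (real^'n) set \<Rightarrow> bool" where
  "smooth_fun_on f U \<longleftrightarrow> (\<forall>ks. \<forall>p\<in>U. iter_pd ks f differentiable (at p))"

definition kdelta :: "'n \<Rightarrow> 'n \<Rightarrow> real" where
  "kdelta i j = (if i = j then 1 else 0)"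

definition Gam :: "(real^'n \<Rightarrow> real^'n) \<Rightarrow> real^'n \<Rightarrow> 'n \<Rightarrow> 'n \<Rightarrow> 'n \<Rightarrow> real" where
  "Gam s p i j k = s p $ j * kdelta i k + s p $ k * kdelta i j"

definition curv :: "(real^'n::finite \<Rightarrow> real^'n) \<Rightarrow> real^'n \<Rightarrow> 'n \<Rightarrow> 'n \<Rightarrow> 'n \<Rightarrow> 'n \<Rightarrow> real" where
  "curv s p i j k l =
     pd k (\<lambda>q. Gam s q i l j) p - pd l (\<lambda>q. Gam s q i k j) p
     + (\<Sum>m\<in>UNIV. Gam s p i k m * Gam s p m l j)
     - (\<Sum>m\<in>UNIV. Gam s p i l m * Gam s p m k j)"

definition cov_deriv :: "(real^'n::finite \<Rightarrow> real^'n) \<Rightarrow> (real^'n \<Rightarrow> real^'n^'n)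
    \<Rightarrow> real^'n \<Rightarrow> 'n \<Rightarrow> 'n \<Rightarrow> 'n \<Rightarrow> real" where
  "cov_deriv s F p k i j =
     pd k (\<lambda>q. F q $ i $ j) p
     - (\<Sum>m\<in>UNIV. Gam s p m k i * F p $ m $ j)
     - (\<Sum>m\<in>UNIV. Gam s p m k j * F p $ i $ m)"

text \<open>The (n+1)x(n+1) matrix of the transformation
  x~ = C x + b u, u~ = c x + beta u, indexed by 'n + unit (last index = u).\<close>
definition block_mat :: "real^'n^'n \<Rightarrow> real^'n \<Rightarrow> real^'n \<Rightarrow> real
    \<Rightarrow> real^('n + unit)^('n + unit)" where
  "block_mat C b c \<beta> = (\<chi> r t. case r of
       Inl i \<Rightarrow> (case t of Inl j \<Rightarrow> C $ i $ j | Inr _ \<Rightarrow> b $ i)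
     | Inr _ \<Rightarrow> (case t of Inl j \<Rightarrow> c $ j | Inr _ \<Rightarrow> \<beta>))"

definition Cbp :: "real^'n^'n \<Rightarrow> real^'n \<Rightarrow> real^'n \<Rightarrow> real^'n^'n" where
  "Cbp C b p = (\<chi> i j. C $ i $ j + b $ i * p $ j)"

definition transf_coeff :: "real^'n^'n \<Rightarrow> real^'n \<Rightarrow> real^'n^'n \<Rightarrow> real^'n \<Rightarrow> real^'n^'n" where
  "transf_coeff C b Fp p = det (Cbp C b p) *\<^sub>R (Cbp C b p ** Fp ** transpose (Cbp C b p))"

text \<open>Linearizable near p0 by an element of SL(n+1,R): on a neighbourhood V of p0
  the transformed coefficient matrix is a function multiple of a constant matrix A.\<close>
definition linearizable_near :: "(real^'n::finite \<Rightarrow> real^'n^'n) \<Rightarrow> (real^'n) set \<Rightarrow> real^'n \<Rightarrow> bool" where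
  "linearizable_near F U p0 \<longleftrightarrow>
     (\<exists>V. open V \<and> p0 \<in> V \<and> V \<subseteq> U \<and>
       (\<exists>C b c \<beta>. det (block_mat C b c \<beta>) = 1 \<and>
         (\<exists>(A::real^'n^'n) (mu::real^'n \<Rightarrow> real). \<forall>p\<in>V.
             det (Cbp C b p) \<noteq> 0 \<and> transf_coeff C b (F p) p = mu p *\<^sub>R A)))"

end

theory Submission
  imports Defs
begin

text \<open>
  The transformation with matrix M(p) = C + b p changes the coefficient matrix F into
  det M * M F M^T. For the covector s = -M^(-1) b one computes
  \<partial>_k (M F M^T) - \<sigma> M F M^T = M (\<partial>_k F - \<sigma> F - s \<otimes> F_k - F_k \<otimes> s) M^T,
  so M F M^T is a function multiple of a constant matrix exactly when
  \<nabla>_k F = (\<sigma>_k - 2 s_k) F. Such an s solves the Riccati system \<partial>_j s_k = s_j s_k,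
  which for n \<ge> 2 is equivalent to flatness of the connection. Conversely, every solution
  of the Riccati system is locally s(p) = s(p0) / (1 - s(p0).(p - p0)), which is -M^(-1) b
  for C = I + s(p0) p0 and b = -s(p0); this M linearizes the equation.
\<close>

lemmas has_derivative_frechet_derivative = frechet_derivative_works[THEN iffD1]

lemma pd_eq_of_has_derivative: "(f has_derivative f') (at p) \<Longrightarrow> pd k f p = f' (axis k 1)"
  unfolding pd_def using frechet_derivative_at by metis

lemma pd_cong_open:
  assumes "open S" "p \<in> S" "\<And>q. q \<in> S \<Longrightarrow> f q = g q"
  shows "pd k f p = pd k g p"
proof -
  have "(f has_derivative f') (at p) \<longleftrightarrow> (g has_derivative f') (at p)" for f'
    using has_derivative_transform_within_open[OF _ assms(1,2)] assms(3) by (metis (no_types, lifting))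
  then show ?thesis unfolding pd_def frechet_derivative_def by simp
qed

lemma differentiable_cong_open:
  assumes "open S" "p \<in> S" "\<And>q. q \<in> S \<Longrightarrow> f q = g q" "f differentiable at p"
  shows "g differentiable at p"
proof -
  obtain f' where "(f has_derivative f') (at p)" using assms(4) unfolding differentiable_def by blast
  then have "(g has_derivative f') (at p)"
    by (rule has_derivative_transform_within_open[OF _ assms(1,2)]) (simp add: assms(3))
  then show ?thesis unfolding differentiable_def by blast
qed

lemma iter_pd_cong_open:
  assumes "open S" "\<And>q. q \<in> S \<Longrightarrow> f q = g q" "q \<in> S"
  shows "iter_pd ks f q = iter_pd ks g q"
  using assms(3)
proof (induction ks arbitrary: q)
  case Nil
  then show ?case using assms(2) by simp
next
  case (Cons k ks)
  then show ?case using pd_cong_open[OF assms(1) Cons.prems, of "iter_pd ks f" "iter_pd ks g"] by simp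
qed

lemma iter_pd_snoc: "iter_pd (ks @ [k]) f = iter_pd ks (pd k f)"
  by (induction ks) auto

lemma pd_add:
  assumes "f differentiable at p" "g differentiable at p"
  shows "pd k (\<lambda>q. f q + g q) p = pd k f p + pd k g p"
  using pd_eq_of_has_derivative[OF has_derivative_add[OF assms[THEN has_derivative_frechet_derivative]]]
  unfolding pd_def by simp

lemma pd_mult:
  fixes f g :: "real^'n::finite \<Rightarrow> real"
  assumes "f differentiable at p" "g differentiable at p"
  shows "pd k (\<lambda>q. f q * g q) p = pd k f p * g p + f p * pd k g p"
  using pd_eq_of_has_derivative[OF has_derivative_mult[OF assms[THEN has_derivative_frechet_derivative]]]
  unfolding pd_def by simp

lemma pd_const_mult:
  fixes f :: "real^'n::finite \<Rightarrow> real"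
  assumes "f differentiable at p"
  shows "pd k (\<lambda>q. a * f q) p = a * pd k f p"
  using pd_eq_of_has_derivative[OF has_derivative_mult_right[OF assms[THEN has_derivative_frechet_derivative]]]
  unfolding pd_def by simp

lemma pd_linear_combination:
  fixes f g :: "real^'n::finite \<Rightarrow> real"
  assumes "f differentiable at p" "g differentiable at p"
  shows "pd k (\<lambda>q. f q * a + g q * b) p = pd k f p * a + pd k g p * b"
proof -
  have "((\<lambda>q. f q * a + g q * b) has_derivative
     (\<lambda>h. frechet_derivative f (at p) h * a + frechet_derivative g (at p) h * b)) (at p)"
    by (intro has_derivative_add has_derivative_mult_left has_derivative_frechet_derivative assms)
  from pd_eq_of_has_derivative[OF this] show ?thesis unfolding pd_def by simp
qed

lemma frechet_derivative_eq_sum_pd: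
  fixes f :: "real^'n::finite \<Rightarrow> real"
  assumes "f differentiable at x"
  shows "frechet_derivative f (at x) h = (\<Sum>j\<in>UNIV. h $ j * pd j f x)"
proof -
  have lin: "linear (frechet_derivative f (at x))"
    using has_derivative_linear[OF has_derivative_frechet_derivative[OF assms]] .
  have "frechet_derivative f (at x) h = frechet_derivative f (at x) (\<Sum>j\<in>UNIV. h $ j *\<^sub>R axis j 1)"
    using basis_expansion[of h] by (simp add: scalar_mult_eq_scaleR)
  also have "\<dots> = (\<Sum>j\<in>UNIV. h $ j * pd j f x)"
    by (simp add: linear_sum[OF lin] linear_scale[OF lin] pd_def o_def)
  finally show ?thesis .
qed

lemma has_derivative_vec_nth: "((\<lambda>x. x $ m) has_derivative (\<lambda>h. h $ m)) (at q)"
  by (rule bounded_linear_imp_has_derivative) (rule bounded_linear_vec_nth)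


section \<open>Smoothness of solutions of the Riccati system\<close>

definition differentiable_upto :: "nat \<Rightarrow> (real^'n::finite) set \<Rightarrow> (real^'n \<Rightarrow> real) \<Rightarrow> bool" where
  "differentiable_upto n V f \<longleftrightarrow> (\<forall>ks. length ks \<le> n \<longrightarrow> (\<forall>p\<in>V. iter_pd ks f differentiable at p))"

lemma smooth_fun_on_iff_differentiable_upto:
  "smooth_fun_on f V \<longleftrightarrow> (\<forall>n. differentiable_upto n V f)"
  unfolding smooth_fun_on_def differentiable_upto_def by (meson le_refl)

lemma smooth_fun_on_imp_differentiable: "smooth_fun_on f U \<Longrightarrow> p \<in> U \<Longrightarrow> f differentiable at p"
  unfolding smooth_fun_on_def by (drule spec[where x="[]"]) simp

lemma differentiable_upto_imp_differentiable:
  "differentiable_upto n V f \<Longrightarrow> p \<in> V \<Longrightarrow> f differentiable at p"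
  unfolding differentiable_upto_def by (drule spec[where x="[]"]) simp

lemma differentiable_upto_mono: "differentiable_upto n V f \<Longrightarrow> m \<le> n \<Longrightarrow> differentiable_upto m V f"
  unfolding differentiable_upto_def by auto

lemma differentiable_upto_pd:
  fixes f :: "real^'n::finite \<Rightarrow> real"
  shows "differentiable_upto (Suc n) V f \<Longrightarrow> differentiable_upto n V (pd k f)"
  unfolding differentiable_upto_def
proof (intro allI impI ballI)
  fix ks :: "'n list" and p
  assume "\<forall>ks. length ks \<le> Suc n \<longrightarrow> (\<forall>p\<in>V. iter_pd ks f differentiable at p)"
    and "length ks \<le> n" "p \<in> V"
  then have "iter_pd (ks @ [k]) f differentiable at p" by simp
  then show "iter_pd ks (pd k f) differentiable at p" by (simp add: iter_pd_snoc)
qed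

lemma differentiable_upto_SucI:
  fixes f :: "real^'n::finite \<Rightarrow> real"
  assumes "open V" "\<And>p. p \<in> V \<Longrightarrow> f differentiable at p"
    and "\<And>k. \<exists>g. differentiable_upto n V g \<and> (\<forall>q\<in>V. pd k f q = g q)"
  shows "differentiable_upto (Suc n) V f"
  unfolding differentiable_upto_def
proof (intro allI impI ballI)
  fix ks :: "'n list" and p assume ks: "length ks \<le> Suc n" and p: "p \<in> V"
  show "iter_pd ks f differentiable at p"
  proof (cases ks rule: rev_exhaust)
    case Nil
    then show ?thesis using assms(2) p by simp
  next
    case (snoc ks' k)
    obtain g where g: "differentiable_upto n V g" "\<And>q. q \<in> V \<Longrightarrow> pd k f q = g q"
      using assms(3) by blast
    have "iter_pd ks' g differentiable at p"
      using g(1) ks snoc p unfolding differentiable_upto_def by auto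
    then have "iter_pd ks' (pd k f) differentiable at p"
      by (rule differentiable_cong_open[OF assms(1) p, rotated])
        (rule iter_pd_cong_open[OF assms(1) _ _, symmetric], simp add: g(2))
    then show ?thesis using snoc by (simp add: iter_pd_snoc)
  qed
qed

lemma iter_pd_add:
  fixes f g :: "real^'n::finite \<Rightarrow> real" and ks :: "'n list"
  assumes "open V" "differentiable_upto (length ks) V f" "differentiable_upto (length ks) V g" "p \<in> V"
  shows "iter_pd ks (\<lambda>q. f q + g q) p = iter_pd ks f p + iter_pd ks g p"
  using assms(2-4)
proof (induction ks arbitrary: p)
  case Nil
  then show ?case by simp
next
  case (Cons k ks)
  have fg: "differentiable_upto (length ks) V f" "differentiable_upto (length ks) V g"
    using Cons.prems(1,2) by (auto elim: differentiable_upto_mono)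
  have "iter_pd (k # ks) (\<lambda>q. f q + g q) p = pd k (\<lambda>q. iter_pd ks f q + iter_pd ks g q) p"
    using pd_cong_open[OF assms(1) Cons.prems(3), of "iter_pd ks (\<lambda>q. f q + g q)"] Cons.IH[OF fg]
    by simp
  also have "\<dots> = iter_pd (k # ks) f p + iter_pd (k # ks) g p"
    using Cons.prems unfolding differentiable_upto_def by (simp add: pd_add)
  finally show ?case .
qed

lemma differentiable_upto_add:
  fixes f g :: "real^'n::finite \<Rightarrow> real"
  assumes "open V" "differentiable_upto n V f" "differentiable_upto n V g"
  shows "differentiable_upto n V (\<lambda>q. f q + g q)"
  unfolding differentiable_upto_def
proof (intro allI impI ballI)
  fix ks :: "'n list" and p assume ks: "length ks \<le> n" and p: "p \<in> V"
  have fg: "differentiable_upto (length ks) V f" "differentiable_upto (length ks) V g"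
    using assms(2,3) ks by (auto elim: differentiable_upto_mono)
  have "(\<lambda>q. iter_pd ks f q + iter_pd ks g q) differentiable at p"
    using assms(2,3) ks p unfolding differentiable_upto_def by (auto intro!: differentiable_add)
  then show "iter_pd ks (\<lambda>q. f q + g q) differentiable at p"
    by (rule differentiable_cong_open[OF assms(1) p, rotated]) (rule iter_pd_add[OF assms(1) fg, symmetric])
qed

lemma differentiable_upto_mult:
  fixes f g :: "real^'n::finite \<Rightarrow> real"
  assumes "open V"
  shows "differentiable_upto n V f \<Longrightarrow> differentiable_upto n V g \<Longrightarrow> differentiable_upto n V (\<lambda>q. f q * g q)"
proof (induction n arbitrary: f g)
  case 0
  then show ?case unfolding differentiable_upto_def by (auto intro: differentiable_mult)
next
  case (Suc n)
  have df: "f differentiable at q" and dg: "g differentiable at q" if "q \<in> V" for q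
    using Suc.prems that by (auto intro: differentiable_upto_imp_differentiable)
  show ?case
  proof (rule differentiable_upto_SucI[OF assms])
    show "(\<lambda>q. f q * g q) differentiable at p" if "p \<in> V" for p
      using df[OF that] dg[OF that] by (rule differentiable_mult)
    fix k
    have "differentiable_upto n V (\<lambda>q. pd k f q * g q + f q * pd k g q)"
      using Suc.prems by (intro differentiable_upto_add[OF assms] Suc.IH)
        (auto intro: differentiable_upto_pd elim: differentiable_upto_mono)
    moreover have "\<forall>q\<in>V. pd k (\<lambda>q. f q * g q) q = pd k f q * g q + f q * pd k g q"
      using df dg pd_mult by blast
    ultimately show "\<exists>h. differentiable_upto n V h \<and> (\<forall>q\<in>V. pd k (\<lambda>q. f q * g q) q = h q)"
      by blast
  qed
qed

text \<open>Bootstrap: if all s_k are differentiable to order n, so are the products s_j s_k = d_j s_k,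
  hence every s_k is differentiable to order n + 1.\<close>

lemma smooth_fun_on_if_riccati:
  fixes s :: "real^'n::finite \<Rightarrow> real^'n"
  assumes V: "open V"
    and d: "\<And>k p. p \<in> V \<Longrightarrow> (\<lambda>q. s q $ k) differentiable at p"
    and riccati: "\<And>j k p. p \<in> V \<Longrightarrow> pd j (\<lambda>q. s q $ k) p = s p $ j * s p $ k"
  shows "smooth_fun_on (\<lambda>p. s p $ k) V"
proof -
  have "\<forall>k. differentiable_upto n V (\<lambda>q. s q $ k)" for n
  proof (induction n)
    case 0
    then show ?case using d unfolding differentiable_upto_def by auto
  next
    case (Suc n)
    show ?case
    proof
      fix k
      show "differentiable_upto (Suc n) V (\<lambda>q. s q $ k)"
      proof (rule differentiable_upto_SucI[OF V d])
        fix j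
        show "\<exists>g. differentiable_upto n V g \<and> (\<forall>q\<in>V. pd j (\<lambda>q. s q $ k) q = g q)"
        proof (intro exI conjI)
          show "differentiable_upto n V (\<lambda>q. s q $ j * s q $ k)"
            by (rule differentiable_upto_mult[OF V Suc.IH[rule_format] Suc.IH[rule_format]])
          show "\<forall>q\<in>V. pd j (\<lambda>q. s q $ k) q = s q $ j * s q $ k"
            using riccati by blast
        qed
      qed
    qed
  qed
  then show ?thesis unfolding smooth_fun_on_iff_differentiable_upto by blast
qed

section \<open>Flatness of the projective connection\<close>

lemma sum_Gam_mult:
  "(\<Sum>m\<in>UNIV. Gam s p i k m * Gam s p m l j) =
     s p $ k * s p $ l * kdelta i j + s p $ k * s p $ j * kdelta i l + 2 * s p $ j * s p $ l * kdelta i k"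
  by (simp add: Gam_def kdelta_def distrib_left distrib_right sum.distrib
      if_distrib[of "\<lambda>t. t * _"] if_distrib[of "\<lambda>t. _ * t"] cong: if_cong)

lemma curv_eq:
  fixes s :: "real^'n::finite \<Rightarrow> real^'n"
  assumes d: "\<And>k. (\<lambda>q. s q $ k) differentiable at p"
  shows "curv s p i j k l =
    (pd k (\<lambda>q. s q $ l) p - pd l (\<lambda>q. s q $ k) p) * kdelta i j
    + (pd k (\<lambda>q. s q $ j) p - s p $ k * s p $ j) * kdelta i l
    - (pd l (\<lambda>q. s q $ j) p - s p $ l * s p $ j) * kdelta i k"
proof -
  have Gam_lj: "(\<lambda>q. Gam s q i l j) = (\<lambda>q. s q $ l * kdelta i j + s q $ j * kdelta i l)"
    and Gam_kj: "(\<lambda>q. Gam s q i k j) = (\<lambda>q. s q $ k * kdelta i j + s q $ j * kdelta i k)"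
    by (simp_all add: Gam_def fun_eq_iff)
  show ?thesis
    unfolding curv_def Gam_lj Gam_kj sum_Gam_mult pd_linear_combination[OF d d]
    by (simp add: algebra_simps)
qed

lemma curv_eq_zero_if_riccati:
  fixes s :: "real^'n::finite \<Rightarrow> real^'n"
  assumes "\<And>k. (\<lambda>q. s q $ k) differentiable at p"
    and "\<And>j k. pd j (\<lambda>q. s q $ k) p = s p $ j * s p $ k"
  shows "curv s p i j k l = 0"
  unfolding curv_eq[OF assms(1)] assms(2) by (simp add: algebra_simps)

text \<open>For n = 1 the curvature vanishes identically; only for n \<ge> 2 does flatness force
  the Riccati system.\<close>

lemma riccati_if_curv_eq_zero:
  fixes s :: "real^'n::finite \<Rightarrow> real^'n"
  assumes "CARD('n) \<ge> 2"
    and d: "\<And>k. (\<lambda>q. s q $ k) differentiable at p"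
    and flat: "\<And>i j k l. curv s p i j k l = 0"
  shows "pd j (\<lambda>q. s q $ k) p = s p $ j * s p $ k"
proof (cases "j = k")
  case True
  obtain i :: 'n where i: "i \<noteq> j"
    using assms(1) by (metis One_nat_def UNIV_I card_1_singletonE card_le_Suc0_iff_eq
        finite_class.finite_UNIV not_less_eq_eq numeral_2_eq_2)
  have "curv s p i j j i = 0" by (rule flat)
  then show ?thesis unfolding curv_eq[OF d] using True i by (simp add: kdelta_def)
next
  case False
  have "curv s p k k j k = 0" "curv s p j j k j = 0" by (rule flat)+
  then have "2 * pd j (\<lambda>q. s q $ k) p - pd k (\<lambda>q. s q $ j) p = s p $ j * s p $ k"
    and "2 * pd k (\<lambda>q. s q $ j) p - pd j (\<lambda>q. s q $ k) p = s p $ j * s p $ k"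
    unfolding curv_eq[OF d] using False by (simp_all add: kdelta_def mult.commute)
  then show ?thesis by linarith
qed

lemma cov_deriv_eq:
  "cov_deriv s F p k i j = pd k (\<lambda>q. F q $ i $ j) p - 2 * s p $ k * F p $ i $ j
     - s p $ i * F p $ k $ j - s p $ j * F p $ i $ k"
  by (simp add: cov_deriv_def Gam_def kdelta_def distrib_left distrib_right sum.distrib
      if_distrib[of "\<lambda>t. t * _"] if_distrib[of "\<lambda>t. _ * t"] cong: if_cong)

section \<open>Derivative of the transformed coefficient matrix\<close>

definition dmat :: "'n::finite \<Rightarrow> (real^'n \<Rightarrow> real^'m::finite^'l::finite) \<Rightarrow> real^'n \<Rightarrow> real^'m^'l" where
  "dmat k X p = (\<chi> i j. pd k (\<lambda>q. X q $ i $ j) p)"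

definition outer :: "real^'l::finite \<Rightarrow> real^'m::finite \<Rightarrow> real^'m^'l" where
  "outer u w = (\<chi> i j. u $ i * w $ j)"

definition congruent_coeff :: "real^'n^'n \<Rightarrow> real^'n \<Rightarrow> (real^'n::finite \<Rightarrow> real^'n^'n) \<Rightarrow> real^'n \<Rightarrow> real^'n^'n" where
  "congruent_coeff C b F q = Cbp C b q ** F q ** transpose (Cbp C b q)"

lemma transf_coeff_eq: "transf_coeff C b (F p) p = det (Cbp C b p) *\<^sub>R congruent_coeff C b F p"
  by (simp add: transf_coeff_def congruent_coeff_def)

lemma matrix_add_rdistrib: "((A::real^'m::finite^'l::finite) + B) ** (C::real^'r::finite^'m) = A ** C + B ** C"
  by (simp add: vec_eq_iff matrix_matrix_mult_def distrib_right sum.distrib)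

lemma matrix_diff_rdistrib: "((A::real^'m::finite^'l::finite) - B) ** (C::real^'r::finite^'m) = A ** C - B ** C"
  by (simp add: vec_eq_iff matrix_matrix_mult_def left_diff_distrib sum_subtractf)

lemma matrix_diff_ldistrib: "(A::real^'m::finite^'l::finite) ** ((B::real^'r::finite^'m) - C) = A ** B - A ** C"
  by (simp add: vec_eq_iff matrix_matrix_mult_def right_diff_distrib sum_subtractf)

lemma outer_matrix_mult: "outer u w ** A = outer u (transpose A *v w)"
  by (simp add: vec_eq_iff outer_def matrix_matrix_mult_def matrix_vector_mult_def transpose_def
      sum_distrib_left mult_ac)

lemma matrix_mult_outer: "A ** outer u w = outer (A *v u) w"
  by (simp add: vec_eq_iff outer_def matrix_matrix_mult_def matrix_vector_mult_def
      sum_distrib_right sum_distrib_left mult_ac)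

lemma transpose_outer: "transpose (outer u w) = outer w u"
  by (simp add: vec_eq_iff outer_def transpose_def)

lemma outer_uminus_left: "outer (- u) w = - outer u w"
  by (simp add: vec_eq_iff outer_def)

lemma outer_uminus_right: "outer u (- w) = - outer u w"
  by (simp add: vec_eq_iff outer_def)

lemma transpose_mult_axis: "transpose A *v axis k 1 = A $ k"
  by (simp add: vec_eq_iff transpose_def matrix_vector_mult_def axis_def
      if_distrib[of "\<lambda>t. _ * t"] cong: if_cong)

lemma row_eq_nth: "row k A = A $ k"
  by (simp add: row_def vec_eq_iff)

lemma matrix_mult_axis: "A *v axis k 1 = column k A"
  by (simp add: vec_eq_iff column_def matrix_vector_mult_def axis_def
      if_distrib[of "\<lambda>t. _ * t"] cong: if_cong)

lemma column_matrix_mult: "column k (A ** B) = A *v column k B"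
  by (simp add: column_def matrix_matrix_mult_def matrix_vector_mult_def vec_eq_iff)

lemma has_derivative_matrix_mult_entry:
  fixes A :: "real^'n::finite \<Rightarrow> real^'m::finite^'l::finite" and B :: "real^'n \<Rightarrow> real^'r::finite^'m"
  assumes dA: "\<And>i j. (\<lambda>q. A q $ i $ j) differentiable at p"
    and dB: "\<And>i j. (\<lambda>q. B q $ i $ j) differentiable at p"
  shows "((\<lambda>q. (A q ** B q) $ i $ j) has_derivative
     (\<lambda>h. \<Sum>m\<in>UNIV. A p $ i $ m * frechet_derivative (\<lambda>q. B q $ m $ j) (at p) h
        + frechet_derivative (\<lambda>q. A q $ i $ m) (at p) h * B p $ m $ j)) (at p)"
  unfolding matrix_matrix_mult_def vec_lambda_beta
  by (intro has_derivative_sum has_derivative_mult has_derivative_frechet_derivative dA dB)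

lemma differentiable_matrix_mult_entry:
  fixes A :: "real^'n::finite \<Rightarrow> real^'m::finite^'l::finite" and B :: "real^'n \<Rightarrow> real^'r::finite^'m"
  assumes "\<And>i j. (\<lambda>q. A q $ i $ j) differentiable at p"
    and "\<And>i j. (\<lambda>q. B q $ i $ j) differentiable at p"
  shows "(\<lambda>q. (A q ** B q) $ i $ j) differentiable at p"
  using has_derivative_matrix_mult_entry[OF assms] unfolding differentiable_def by blast

lemma dmat_matrix_mult:
  fixes A :: "real^'n::finite \<Rightarrow> real^'m::finite^'l::finite" and B :: "real^'n \<Rightarrow> real^'r::finite^'m"
  assumes "\<And>i j. (\<lambda>q. A q $ i $ j) differentiable at p"
    and "\<And>i j. (\<lambda>q. B q $ i $ j) differentiable at p"
  shows "dmat k (\<lambda>q. A q ** B q) p = dmat k A p ** B p + A p ** dmat k B p"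
proof -
  have "pd k (\<lambda>q. (A q ** B q) $ i $ j) p = (dmat k A p ** B p + A p ** dmat k B p) $ i $ j" for i j
    using pd_eq_of_has_derivative[OF has_derivative_matrix_mult_entry[OF assms, of i j], of k]
    by (simp add: dmat_def pd_def matrix_matrix_mult_def sum.distrib add.commute)
  then show ?thesis by (simp add: vec_eq_iff dmat_def)
qed

lemma dmat_transpose: "dmat k (\<lambda>q. transpose (A q)) p = transpose (dmat k A p)"
  by (simp add: vec_eq_iff dmat_def transpose_def)

lemma has_derivative_Cbp_entry: "((\<lambda>q. Cbp C b q $ i $ j) has_derivative (\<lambda>h. b $ i * h $ j)) (at p)"
proof -
  have "((\<lambda>q. C $ i $ j + b $ i * q $ j) has_derivative (\<lambda>h. 0 + b $ i * h $ j)) (at p)"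
    by (intro has_derivative_add has_derivative_const has_derivative_mult_right has_derivative_vec_nth)
  then show ?thesis by (simp add: Cbp_def)
qed

lemma differentiable_Cbp_entry: "(\<lambda>q. Cbp C b q $ i $ j) differentiable at p"
  using has_derivative_Cbp_entry unfolding differentiable_def by blast

lemma dmat_Cbp: "dmat k (\<lambda>q. Cbp C b q) p = outer b (axis k 1)"
  by (simp add: vec_eq_iff dmat_def outer_def pd_eq_of_has_derivative[OF has_derivative_Cbp_entry])

lemma differentiable_congruent_coeff_entry:
  assumes "\<And>i j. (\<lambda>q. F q $ i $ j) differentiable at p"
  shows "(\<lambda>q. congruent_coeff C b F q $ i $ j) differentiable at p"
  unfolding congruent_coeff_def
  by (intro differentiable_matrix_mult_entry differentiable_Cbp_entry assms)
    (simp add: transpose_def differentiable_Cbp_entry)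

text \<open>The identity behind the theorem: with (C + b p) s = -b, the derivative of the
  transformed matrix is the congruence image of the matrix of the covariant derivative.\<close>

lemma dmat_congruent_coeff:
  fixes F :: "real^'n::finite \<Rightarrow> real^'n^'n"
  assumes dF: "\<And>i j. (\<lambda>q. F q $ i $ j) differentiable at p"
    and s: "Cbp C b p *v s = - b"
  shows "dmat k (congruent_coeff C b F) p - \<sigma> *\<^sub>R congruent_coeff C b F p =
    Cbp C b p ** (dmat k F p - (\<sigma> *\<^sub>R F p + outer s (F p $ k) + outer (column k (F p)) s))
      ** transpose (Cbp C b p)"
proof -
  let ?M = "Cbp C b p"
  have dMF: "\<And>i j. (\<lambda>q. (Cbp C b q ** F q) $ i $ j) differentiable at p"
    by (intro differentiable_matrix_mult_entry differentiable_Cbp_entry dF)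
  have dMt: "\<And>i j. (\<lambda>q. transpose (Cbp C b q) $ i $ j) differentiable at p"
    by (simp add: transpose_def differentiable_Cbp_entry)
  have "dmat k (congruent_coeff C b F) p = dmat k (\<lambda>q. Cbp C b q ** F q) p ** transpose ?M
       + (?M ** F p) ** dmat k (\<lambda>q. transpose (Cbp C b q)) p"
    unfolding congruent_coeff_def by (rule dmat_matrix_mult[OF dMF dMt])
  also have "\<dots> = (outer b (axis k 1) ** F p + ?M ** dmat k F p) ** transpose ?M
       + (?M ** F p) ** outer (axis k 1) b"
    unfolding dmat_matrix_mult[OF differentiable_Cbp_entry dF] dmat_transpose dmat_Cbp transpose_outer ..
  also have "\<dots> = outer b (?M *v (F p $ k)) + ?M ** dmat k F p ** transpose ?M
       + outer (?M *v column k (F p)) b"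
    by (simp add: matrix_add_rdistrib outer_matrix_mult matrix_mult_outer transpose_mult_axis
        matrix_vector_mul_assoc[symmetric] matrix_mult_axis row_eq_nth column_matrix_mult)
  finally have dH: "dmat k (congruent_coeff C b F) p = outer b (?M *v (F p $ k))
       + ?M ** dmat k F p ** transpose ?M + outer (?M *v column k (F p)) b" .
  have "?M ** (dmat k F p - (\<sigma> *\<^sub>R F p + outer s (F p $ k) + outer (column k (F p)) s))
      ** transpose ?M
    = ?M ** dmat k F p ** transpose ?M - \<sigma> *\<^sub>R congruent_coeff C b F p
      - outer (?M *v s) (?M *v (F p $ k)) - outer (?M *v column k (F p)) (?M *v s)"
    by (simp add: congruent_coeff_def matrix_diff_ldistrib matrix_add_ldistrib matrix_diff_rdistrib
        matrix_add_rdistrib matrix_scalar_ac scalar_matrix_assoc matrix_mul_assoc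
        outer_matrix_mult matrix_mult_outer)
  then show ?thesis unfolding dH s outer_uminus_left outer_uminus_right by simp
qed

lemma congruence_eq_zero_iff:
  fixes M X :: "real^'n::finite^'n"
  assumes "invertible M"
  shows "M ** X ** transpose M = 0 \<longleftrightarrow> X = 0"
proof
  assume MX: "M ** X ** transpose M = 0"
  obtain N where N: "N ** M = mat 1"
    using assms unfolding invertible_def by blast
  have "X = (N ** M) ** X ** transpose (N ** M)" using N by (simp add: transpose_mat)
  also have "\<dots> = N ** (M ** X ** transpose M) ** transpose N"
    by (simp add: matrix_transpose_mul matrix_mul_assoc)
  finally show "X = 0" using MX by simp
qed simp

lemma cov_deriv_proportional_iff:
  fixes F :: "real^'n::finite \<Rightarrow> real^'n^'n"
  assumes dF: "\<And>i j. (\<lambda>q. F q $ i $ j) differentiable at p"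
    and inv: "invertible (Cbp C b p)"
    and s: "Cbp C b p *v s p = - b"
  shows "(\<forall>i j. cov_deriv s F p k i j = \<rho> * F p $ i $ j) \<longleftrightarrow>
    dmat k (congruent_coeff C b F) p = (\<rho> + 2 * s p $ k) *\<^sub>R congruent_coeff C b F p"
    (is "_ \<longleftrightarrow> dmat k ?H p = ?\<sigma> *\<^sub>R ?H p")
proof -
  have "dmat k ?H p = ?\<sigma> *\<^sub>R ?H p \<longleftrightarrow> dmat k ?H p - ?\<sigma> *\<^sub>R ?H p = 0"
    by simp
  also have "\<dots> \<longleftrightarrow>
      dmat k F p - (?\<sigma> *\<^sub>R F p + outer (s p) (F p $ k) + outer (column k (F p)) (s p)) = 0"
    unfolding dmat_congruent_coeff[OF dF s] by (rule congruence_eq_zero_iff[OF inv])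
  also have "\<dots> \<longleftrightarrow> (\<forall>i j. pd k (\<lambda>q. F q $ i $ j) p =
      ?\<sigma> * F p $ i $ j + s p $ i * F p $ k $ j + F p $ i $ k * s p $ j)"
    by (simp add: vec_eq_iff dmat_def outer_def column_def)
  also have "\<dots> \<longleftrightarrow> (\<forall>i j. cov_deriv s F p k i j = \<rho> * F p $ i $ j)"
    unfolding cov_deriv_eq by (simp add: algebra_simps)
  finally show ?thesis by simp
qed

section \<open>From a linearizing transformation to a flat connection\<close>

lemma Cbp_mult_vec_shift:
  "Cbp C b x *v v = Cbp C b q *v v + (\<Sum>j\<in>UNIV. v $ j * (x $ j - q $ j)) *\<^sub>R b"
  by (simp add: vec_eq_iff Cbp_def matrix_vector_mult_def algebra_simps sum.distrib
      sum_subtractf sum_distrib_left sum_distrib_right)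

lemma has_derivative_inverse_affine:
  fixes v q :: "real^'n::finite"
  shows "((\<lambda>x. c / (1 - (\<Sum>m\<in>UNIV. v $ m * (x $ m - q $ m)))) has_derivative
      (\<lambda>h. c * (\<Sum>m\<in>UNIV. v $ m * h $ m))) (at q)"
proof -
  have "((\<lambda>x. 1 - (\<Sum>m\<in>UNIV. v $ m * (x $ m - q $ m))) has_derivative
      (\<lambda>h. 0 - (\<Sum>m\<in>UNIV. v $ m * (h $ m - 0)))) (at q)"
    by (intro has_derivative_diff has_derivative_const has_derivative_sum has_derivative_mult_right
        has_derivative_vec_nth)
  from has_derivative_divide'[OF has_derivative_const this] show ?thesis by simp
qed

text \<open>Near q, the solution of (C + b x) s = -b is s(x) = s(q) / (1 - s(q)\<cdot>(x - q)).\<close>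

lemma riccati_if_Cbp_solution:
  fixes s :: "real^'n::finite \<Rightarrow> real^'n"
  assumes V: "open V" and q: "q \<in> V"
    and s: "\<And>x. x \<in> V \<Longrightarrow> Cbp C b x *v s x = - b"
    and inv: "\<And>x. x \<in> V \<Longrightarrow> invertible (Cbp C b x)"
  shows "(\<lambda>x. s x $ k) differentiable at q \<and> pd j (\<lambda>x. s x $ k) q = s q $ j * s q $ k"
proof -
  define g where "g x = 1 - (\<Sum>m\<in>UNIV. s q $ m * (x $ m - q $ m))" for x :: "real^'n"
  define W where "W = V \<inter> {x. g x \<noteq> 0}"
  have W: "open W" unfolding W_def g_def
    by (intro open_Int V open_Collect_neq continuous_intros)
  have qW: "q \<in> W" by (simp add: W_def g_def q)
  have local_form: "s x $ k = s q $ k / g x" if "x \<in> W" for x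
  proof -
    have x: "x \<in> V" "g x \<noteq> 0" using that by (auto simp: W_def)
    have "Cbp C b x *v s q = - (g x *\<^sub>R b)"
      using Cbp_mult_vec_shift[of C b x "s q" q] s[OF q] by (simp add: g_def algebra_simps)
    then have "Cbp C b x *v ((1 / g x) *\<^sub>R s q) = Cbp C b x *v s x"
      using x s by (simp add: matrix_vector_mult_scaleR)
    then have "(1 / g x) *\<^sub>R s q = s x"
      using inj_matrix_vector_mult[OF inv[OF x(1)]] unfolding inj_def by blast
    then show ?thesis by (auto simp: vec_eq_iff)
  qed
  have dg: "((\<lambda>x. s q $ k / g x) has_derivative (\<lambda>h. s q $ k * (\<Sum>m\<in>UNIV. s q $ m * h $ m))) (at q)"
    unfolding g_def by (rule has_derivative_inverse_affine)
  have "pd j (\<lambda>x. s x $ k) q = pd j (\<lambda>x. s q $ k / g x) q"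
    by (rule pd_cong_open[OF W qW local_form])
  also have "\<dots> = s q $ k * (\<Sum>m\<in>UNIV. s q $ m * axis j 1 $ m)"
    by (rule pd_eq_of_has_derivative[OF dg])
  also have "\<dots> = s q $ j * s q $ k"
    by (simp add: axis_def if_distrib[of "\<lambda>t. _ * t"] cong: if_cong)
  finally have "pd j (\<lambda>x. s x $ k) q = s q $ j * s q $ k" .
  moreover have "(\<lambda>x. s x $ k) differentiable at q"
    using dg unfolding differentiable_def
    by (metis (no_types, lifting) W qW local_form has_derivative_transform_within_open)
  ultimately show ?thesis by blast
qed

lemma congruent_coeff_nonzero:
  assumes "det (Cbp C b p) \<noteq> 0" "det (F p) \<noteq> 0"
  shows "congruent_coeff C b F p \<noteq> 0"
proof
  assume "congruent_coeff C b F p = 0"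
  then have "det (Cbp C b p) * det (F p) * det (Cbp C b p) = 0"
    by (metis congruent_coeff_def det_0 det_mul det_transpose mat_0)
  then show False using assms by simp
qed

lemma dmat_eq_if_proportional:
  fixes H :: "real^'n::finite \<Rightarrow> real^'m::finite^'l::finite"
  assumes V: "open V" "p \<in> V" and H: "\<And>x. x \<in> V \<Longrightarrow> H x = \<phi> x *\<^sub>R A"
    and A: "A $ a $ e \<noteq> 0" and d: "(\<lambda>x. H x $ a $ e) differentiable at p"
    and Hp: "H p $ a $ e \<noteq> 0"
  shows "dmat k H p = (pd k (\<lambda>x. H x $ a $ e) p / H p $ a $ e) *\<^sub>R H p"
proof -
  have entry: "H x $ i $ j = (A $ i $ j / A $ a $ e) * H x $ a $ e" if "x \<in> V" for x i j
    using H[OF that] A by simp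
  have pd_entry: "pd k (\<lambda>x. H x $ i $ j) p = (A $ i $ j / A $ a $ e) * pd k (\<lambda>x. H x $ a $ e) p"
    for i j
  proof -
    have "pd k (\<lambda>x. H x $ i $ j) p = pd k (\<lambda>x. (A $ i $ j / A $ a $ e) * H x $ a $ e) p"
      by (rule pd_cong_open[OF V entry])
    then show ?thesis by (simp only: pd_const_mult[OF d])
  qed
  have "dmat k H p $ i $ j = ((pd k (\<lambda>x. H x $ a $ e) p / H p $ a $ e) *\<^sub>R H p) $ i $ j" for i j
  proof -
    have "H p $ i $ j = (A $ i $ j / A $ a $ e) * H p $ a $ e" by (rule entry[OF V(2)])
    then show ?thesis using pd_entry[of i j] Hp by (simp add: dmat_def field_simps)
  qed
  then show ?thesis by (simp add: vec_eq_iff)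
qed

lemma cov_deriv_proportional_if_linearizable:
  fixes F :: "real^'n::finite \<Rightarrow> real^'n^'n"
  assumes V: "open V"
    and dF: "\<And>p i j. p \<in> V \<Longrightarrow> (\<lambda>q. F q $ i $ j) differentiable at p"
    and detF: "\<And>p. p \<in> V \<Longrightarrow> det (F p) \<noteq> 0"
    and detM: "\<And>p. p \<in> V \<Longrightarrow> det (Cbp C b p) \<noteq> 0"
    and tc: "\<And>p. p \<in> V \<Longrightarrow> transf_coeff C b (F p) p = \<mu> p *\<^sub>R A"
    and s: "\<And>p. p \<in> V \<Longrightarrow> Cbp C b p *v s p = - b"
  shows "\<exists>c :: real^'n \<Rightarrow> real^'n. \<forall>p\<in>V. \<forall>k i j. cov_deriv s F p k i j = c p $ k * F p $ i $ j"
proof -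
  let ?H = "congruent_coeff C b F"
  have H: "?H p = (\<mu> p / det (Cbp C b p)) *\<^sub>R A" if "p \<in> V" for p
  proof -
    have "?H p = (1 / det (Cbp C b p)) *\<^sub>R (det (Cbp C b p) *\<^sub>R ?H p)"
      using detM[OF that] by simp
    then show ?thesis using tc[OF that] unfolding transf_coeff_eq by simp
  qed
  have H_nonzero: "?H p \<noteq> 0" if "p \<in> V" for p
    using congruent_coeff_nonzero detM detF that by blast
  show ?thesis
  proof (cases "A = 0")
    case True
    then have "V = {}" using H H_nonzero by auto
    then show ?thesis by blast
  next
    case False
    then obtain a e where A: "A $ a $ e \<noteq> 0" by (metis vec_eq_iff zero_index)
    have Hae: "?H p $ a $ e \<noteq> 0" if "p \<in> V" for p
      using H[OF that] H_nonzero[OF that] A by auto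
    define c where "c p = (\<chi> k. pd k (\<lambda>q. ?H q $ a $ e) p / ?H p $ a $ e - 2 * s p $ k)" for p
    have "cov_deriv s F p k i j = c p $ k * F p $ i $ j" if p: "p \<in> V" for p k i j
    proof -
      have dFp: "\<And>i j. (\<lambda>q. F q $ i $ j) differentiable at p" using dF p by blast
      have inv: "invertible (Cbp C b p)" using detM[OF p] invertible_det_nz by blast
      have "dmat k ?H p = (c p $ k + 2 * s p $ k) *\<^sub>R ?H p"
        using dmat_eq_if_proportional[OF V p H A differentiable_congruent_coeff_entry[OF dFp] Hae[OF p]]
        by (simp add: c_def)
      then show ?thesis
        using cov_deriv_proportional_iff[where s = s, OF dFp inv s[OF p]] by blast
    qed
    then show ?thesis by blast
  qed
qed

lemma flat_if_linearizable:
  fixes F :: "real^'n::finite \<Rightarrow> real^'n^'n"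
  assumes V: "open V"
    and dF: "\<And>p i j. p \<in> V \<Longrightarrow> (\<lambda>q. F q $ i $ j) differentiable at p"
    and detF: "\<And>p. p \<in> V \<Longrightarrow> det (F p) \<noteq> 0"
    and detM: "\<And>p. p \<in> V \<Longrightarrow> det (Cbp C b p) \<noteq> 0"
    and tc: "\<And>p. p \<in> V \<Longrightarrow> transf_coeff C b (F p) p = \<mu> p *\<^sub>R A"
  shows "\<exists>s :: real^'n \<Rightarrow> real^'n. (\<forall>k. smooth_fun_on (\<lambda>p. s p $ k) V) \<and>
    (\<forall>p\<in>V. \<forall>i j k l. curv s p i j k l = 0) \<and>
    (\<exists>c :: real^'n \<Rightarrow> real^'n. \<forall>p\<in>V. \<forall>k i j. cov_deriv s F p k i j = c p $ k * F p $ i $ j)"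
proof -
  define s where "s p = matrix_inv (Cbp C b p) *v (- b)" for p
  have inv: "invertible (Cbp C b p)" if "p \<in> V" for p
    using detM[OF that] invertible_det_nz by blast
  have s_sol: "Cbp C b p *v s p = - b" if "p \<in> V" for p
    using inv[OF that] unfolding s_def invertible_def matrix_inv_def
    by (metis (mono_tags, lifting) matrix_vector_mul_assoc matrix_vector_mul_lid someI_ex)
  have ds: "(\<lambda>q. s q $ k) differentiable at p"
    and riccati: "pd j (\<lambda>q. s q $ k) p = s p $ j * s p $ k" if "p \<in> V" for p j k
    using riccati_if_Cbp_solution[OF V that s_sol inv] by blast+
  have "\<forall>k. smooth_fun_on (\<lambda>p. s p $ k) V"
    using smooth_fun_on_if_riccati[OF V ds riccati] by blast
  moreover have "\<forall>p\<in>V. \<forall>i j k l. curv s p i j k l = 0"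
    using curv_eq_zero_if_riccati[OF ds riccati] by blast
  moreover note cov_deriv_proportional_if_linearizable[OF V dF detF detM tc s_sol]
  ultimately show ?thesis by blast
qed

section \<open>From a flat connection to a linearizing transformation\<close>

text \<open>The last row is the last unit row plus a combination of the others, so the
  determinant equals that of the identity.\<close>

lemma det_block_mat_lower: "det (block_mat (mat 1 :: real^'n::finite^'n) 0 w 1) = 1"
proof -
  let ?I = "mat 1 :: real^('n + unit)^('n + unit)"
  define x where "x = (\<Sum>i\<in>UNIV. w $ i *s row (Inl i) ?I)"
  have x_entry: "x $ t = (case t of Inl j \<Rightarrow> w $ j | Inr _ \<Rightarrow> 0)" for t
    unfolding x_def
    by (cases t) (simp_all add: row_def mat_def if_distrib[of "\<lambda>u. _ * u"] cong: if_cong)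
  have span: "x \<in> vec.span {row j ?I | j. j \<noteq> Inr ()}"
    unfolding x_def by (intro vec.span_sum vec.span_scale vec.span_base) auto
  have "block_mat (mat 1) 0 w 1 = (\<chi> k. if k = Inr () then row (Inr ()) ?I + x else row k ?I)"
    by (simp add: vec_eq_iff block_mat_def row_def mat_def x_entry split: sum.splits)
  then show ?thesis using det_row_span[OF span] by simp
qed

lemma transpose_block_mat_upper:
  "transpose (block_mat (mat 1 :: real^'n::finite^'n) b 0 1) = block_mat (mat 1) 0 b 1"
  by (simp add: vec_eq_iff block_mat_def transpose_def mat_def split: sum.splits)

lemma sum_UNIV_Plus:
  "(\<Sum>t\<in>(UNIV :: ('a::finite + 'b::finite) set). f t) = (\<Sum>i\<in>UNIV. f (Inl i)) + (\<Sum>u\<in>UNIV. f (Inr u))"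
  using sum.Plus[of "UNIV :: 'a set" "UNIV :: 'b set" f] by (simp add: o_def)

lemma block_mat_factor:
  "block_mat (mat 1 + outer v p) (- v) (- p) 1 =
     block_mat (mat 1 :: real^'n::finite^'n) (- v) 0 1 ** block_mat (mat 1) 0 (- p) 1"
  by (simp add: vec_eq_iff block_mat_def matrix_matrix_mult_def sum_UNIV_Plus mat_def outer_def
      if_distrib[of "\<lambda>u. u * _"] if_distrib[of "\<lambda>u. _ * u"] split: sum.splits cong: if_cong)

lemma det_block_mat_unimodular:
  fixes v p :: "real^'n::finite"
  shows "det (block_mat (mat 1 + outer v p) (- v) (- p) (1::real)) = 1"
proof -
  have "det (block_mat (mat 1 :: real^'n^'n) (- v) 0 1) = 1"
    by (metis det_block_mat_lower det_transpose transpose_block_mat_upper)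
  then show ?thesis unfolding block_mat_factor det_mul using det_block_mat_lower by simp
qed

text \<open>Uniqueness for the Riccati system: with D(x) = 1 + s(x)\<cdot>(x - p0), the ratios
  s_k / D have zero derivative, so s = D s(p0).\<close>

lemma riccati_solution_eq:
  fixes s :: "real^'n::finite \<Rightarrow> real^'n"
  assumes S: "open S" "connected S" "p0 \<in> S" "x \<in> S"
    and ds: "\<And>p k. p \<in> S \<Longrightarrow> (\<lambda>q. s q $ k) differentiable at p"
    and riccati: "\<And>p j k. p \<in> S \<Longrightarrow> pd j (\<lambda>q. s q $ k) p = s p $ j * s p $ k"
    and D_nonzero: "\<And>p. p \<in> S \<Longrightarrow> 1 + (\<Sum>m\<in>UNIV. s p $ m * (p $ m - p0 $ m)) \<noteq> 0"
  shows "s x = (1 + (\<Sum>m\<in>UNIV. s x $ m * (x $ m - p0 $ m))) *\<^sub>R s p0"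
proof -
  define D where "D p = 1 + (\<Sum>m\<in>UNIV. s p $ m * (p $ m - p0 $ m))" for p
  have "s x $ k / D x = s p0 $ k / D p0" for k
  proof (rule has_derivative_zero_unique_connected[OF S(1,2) _ S(4,3)])
    fix y assume y: "y \<in> S"
    define \<sigma> where "\<sigma> h = (\<Sum>j\<in>UNIV. h $ j * s y $ j)" for h
    have fds: "frechet_derivative (\<lambda>q. s q $ m) (at y) h = \<sigma> h * s y $ m" for m h
      unfolding frechet_derivative_eq_sum_pd[OF ds[OF y]] riccati[OF y] \<sigma>_def
      by (simp add: sum_distrib_left mult_ac)
    have "(D has_derivative (\<lambda>h. 0 + (\<Sum>m\<in>UNIV. s y $ m * (h $ m - 0)
        + frechet_derivative (\<lambda>q. s q $ m) (at y) h * (y $ m - p0 $ m)))) (at y)"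
      unfolding D_def
      by (intro has_derivative_add has_derivative_const has_derivative_sum has_derivative_mult
          has_derivative_diff has_derivative_vec_nth has_derivative_frechet_derivative ds y)
    then have dD: "(D has_derivative (\<lambda>h. \<sigma> h * D y)) (at y)"
      by (rule has_derivative_eq_rhs)
        (simp add: fun_eq_iff fds D_def \<sigma>_def sum.distrib sum_distrib_left algebra_simps sum_subtractf)
    have "((\<lambda>q. s q $ k / D q) has_derivative
        (\<lambda>h. (\<sigma> h * s y $ k * D y - s y $ k * (\<sigma> h * D y)) / (D y * D y))) (at y)"
      using has_derivative_divide'[OF has_derivative_frechet_derivative[OF ds[OF y]] dD]
        D_nonzero[OF y] by (simp add: fds D_def)
    then show "((\<lambda>q. s q $ k / D q) has_derivative (\<lambda>h. 0)) (at y)" by simp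
  qed
  moreover have "D p0 = 1" "D x \<noteq> 0" using D_nonzero[OF S(4)] by (simp_all add: D_def)
  ultimately have "s x = D x *\<^sub>R s p0" by (simp add: vec_eq_iff field_simps)
  then show ?thesis by (simp only: D_def)
qed

lemma proportional_if_dmat_proportional:
  fixes H :: "real^'n::finite \<Rightarrow> real^'m::finite^'l::finite"
  assumes S: "open S" "connected S" "p0 \<in> S" "x \<in> S"
    and dH: "\<And>p i j. p \<in> S \<Longrightarrow> (\<lambda>q. H q $ i $ j) differentiable at p"
    and dmat_H: "\<And>p k. p \<in> S \<Longrightarrow> dmat k H p = \<rho> p k *\<^sub>R H p"
    and H_nonzero: "\<And>p. p \<in> S \<Longrightarrow> H p $ a $ e \<noteq> 0"
  shows "H x = (H x $ a $ e / H p0 $ a $ e) *\<^sub>R H p0"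
proof -
  have ratio: "H x $ i $ j / H x $ a $ e = H p0 $ i $ j / H p0 $ a $ e" for i j
  proof (rule has_derivative_zero_unique_connected[OF S(1,2) _ S(4,3)])
    fix y assume y: "y \<in> S"
    define \<tau> where "\<tau> h = (\<Sum>k\<in>UNIV. h $ k * \<rho> y k)" for h
    have fdH: "frechet_derivative (\<lambda>q. H q $ i' $ j') (at y) h = \<tau> h * H y $ i' $ j'" for i' j' h
    proof -
      have "pd k (\<lambda>q. H q $ i' $ j') y = \<rho> y k * H y $ i' $ j'" for k
        using dmat_H[OF y, of k] by (simp add: vec_eq_iff dmat_def)
      then show ?thesis
        unfolding frechet_derivative_eq_sum_pd[OF dH[OF y]] \<tau>_def by (simp add: sum_distrib_left mult_ac)
    qed
    have "((\<lambda>q. H q $ i $ j / H q $ a $ e) has_derivative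
       (\<lambda>h. (\<tau> h * H y $ i $ j * H y $ a $ e - H y $ i $ j * (\<tau> h * H y $ a $ e))
         / (H y $ a $ e * H y $ a $ e))) (at y)"
      using has_derivative_divide'[OF dH[OF y, THEN has_derivative_frechet_derivative]
          dH[OF y, THEN has_derivative_frechet_derivative] H_nonzero[OF y]]
      by (simp add: fdH)
    then show "((\<lambda>q. H q $ i $ j / H q $ a $ e) has_derivative (\<lambda>h. 0)) (at y)" by simp
  qed
  obtain \<kappa> where \<kappa>: "\<kappa> = H x $ a $ e / H p0 $ a $ e" by blast
  have "H x $ i $ j = \<kappa> * H p0 $ i $ j" for i j
    using ratio[of i j] H_nonzero[OF S(3)] H_nonzero[OF S(4)] unfolding \<kappa> by (simp add: field_simps)
  then show ?thesis unfolding \<kappa>[symmetric] by (simp add: vec_eq_iff)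
qed

lemma Cbp_mult_riccati_solution:
  fixes s :: "real^'n::finite \<Rightarrow> real^'n"
  assumes S: "open S" "connected S" "p0 \<in> S" "x \<in> S"
    and ds: "\<And>p k. p \<in> S \<Longrightarrow> (\<lambda>q. s q $ k) differentiable at p"
    and riccati: "\<And>p j k. p \<in> S \<Longrightarrow> pd j (\<lambda>q. s q $ k) p = s p $ j * s p $ k"
    and D_nonzero: "\<And>p. p \<in> S \<Longrightarrow> 1 + (\<Sum>m\<in>UNIV. s p $ m * (p $ m - p0 $ m)) \<noteq> 0"
  shows "Cbp (mat 1 + outer (s p0) p0) (- s p0) x *v s x = s p0"
proof -
  let ?M = "Cbp (mat 1 + outer (s p0) p0) (- s p0)"
  define D where "D = 1 + (\<Sum>m\<in>UNIV. s x $ m * (x $ m - p0 $ m))"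
  have sx: "s x = D *\<^sub>R s p0"
    unfolding D_def by (rule riccati_solution_eq[OF S ds riccati D_nonzero])
  have "?M p0 = mat 1"
    by (simp add: vec_eq_iff Cbp_def mat_def outer_def)
  then have "?M x *v s x = s x + (D - 1) *\<^sub>R (- s p0)"
    using Cbp_mult_vec_shift[of _ _ x "s x" p0] by (simp add: D_def)
  also have "\<dots> = s p0" by (simp add: sx algebra_simps)
  finally show ?thesis .
qed

lemma linearizable_near_if_congruent_coeff_proportional:
  assumes W: "open W" "p0 \<in> W" "W \<subseteq> V"
    and unimodular: "det (block_mat C b c \<beta>) = 1"
    and detM: "\<And>x. x \<in> W \<Longrightarrow> det (Cbp C b x) \<noteq> 0"
    and H: "\<And>x. x \<in> W \<Longrightarrow> congruent_coeff C b F x = \<kappa> x *\<^sub>R A"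
  shows "linearizable_near F V p0"
proof -
  have tc: "transf_coeff C b (F x) x = (det (Cbp C b x) * \<kappa> x) *\<^sub>R A" if "x \<in> W" for x
    unfolding transf_coeff_eq H[OF that] by simp
  show ?thesis
    unfolding linearizable_near_def
    by (intro exI[of _ W] exI[of _ C] exI[of _ b] exI[of _ c] exI[of _ \<beta>] exI[of _ A]
        exI[of _ "\<lambda>x. det (Cbp C b x) * \<kappa> x"] conjI ballI W unimodular detM tc)
qed

lemma ball_avoiding_zero:
  fixes g :: "'a::metric_space \<Rightarrow> real"
  assumes "open V" "p0 \<in> V" "continuous_on V g" "g p0 \<noteq> 0"
  obtains r where "0 < r" "ball p0 r \<subseteq> V" "\<And>x. x \<in> ball p0 r \<Longrightarrow> g x \<noteq> 0"
proof -
  obtain r where r: "0 < r" "\<And>x. dist p0 x < r \<Longrightarrow> g x \<noteq> 0"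
    using continuous_on_open_avoid[OF assms(3,1,2,4)] by blast
  obtain r' where r': "0 < r'" "ball p0 r' \<subseteq> V"
    using open_contains_ball assms(1,2) by blast
  show ?thesis
    using r r' by (intro that[of "min r r'"]) auto
qed

text \<open>The linearizing transformation is normalized by C + b p0 = I, which forces
  C = I + s(p0) p0 and b = -s(p0); then (C + b x) s(x) = -b holds on a ball around p0.\<close>

lemma linearizable_if_riccati:
  fixes F :: "real^'n::finite \<Rightarrow> real^'n^'n" and s c :: "real^'n \<Rightarrow> real^'n"
  assumes V: "open V" "p0 \<in> V"
    and dF: "\<And>p i j. p \<in> V \<Longrightarrow> (\<lambda>q. F q $ i $ j) differentiable at p"
    and detF: "\<And>p. p \<in> V \<Longrightarrow> det (F p) \<noteq> 0"
    and ds: "\<And>p k. p \<in> V \<Longrightarrow> (\<lambda>q. s q $ k) differentiable at p"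
    and riccati: "\<And>p j k. p \<in> V \<Longrightarrow> pd j (\<lambda>q. s q $ k) p = s p $ j * s p $ k"
    and cov: "\<And>p k i j. p \<in> V \<Longrightarrow> cov_deriv s F p k i j = c p $ k * F p $ i $ j"
  shows "linearizable_near F V p0"
proof -
  define C where "C = mat 1 + outer (s p0) p0"
  define b where "b = - s p0"
  let ?H = "congruent_coeff C b F"
  have "F p0 \<noteq> 0" using detF[OF V(2)] by (metis det_0 mat_0)
  then obtain a e where "F p0 $ a $ e \<noteq> 0" by (metis vec_eq_iff zero_index)
  moreover have Cbp_p0: "Cbp C b p0 = mat 1"
    by (simp add: vec_eq_iff Cbp_def C_def b_def mat_def outer_def)
  ultimately have H_p0: "?H p0 $ a $ e \<noteq> 0" by (simp add: congruent_coeff_def transpose_mat)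
  define g where
    "g x = (1 + (\<Sum>m\<in>UNIV. s x $ m * (x $ m - p0 $ m))) * ?H x $ a $ e * det (Cbp C b x)" for x
  have "continuous_on V g"
  proof -
    have cs: "continuous_on V (\<lambda>x. s x $ m)" for m
      using ds by (intro continuous_at_imp_continuous_on ballI differentiable_imp_continuous_within)
    have cH: "continuous_on V (\<lambda>x. ?H x $ a $ e)"
      using dF differentiable_congruent_coeff_entry
      by (intro continuous_at_imp_continuous_on ballI differentiable_imp_continuous_within) blast
    have cdet: "continuous_on V (\<lambda>x. det (Cbp C b x))"
      unfolding det_def Cbp_def vec_lambda_beta by (intro continuous_intros)
    show ?thesis unfolding g_def by (intro cs cH cdet continuous_intros)
  qed
  moreover have "g p0 \<noteq> 0" using H_p0 by (simp add: g_def Cbp_p0)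
  ultimately obtain r where r: "0 < r" "ball p0 r \<subseteq> V" "\<And>x. x \<in> ball p0 r \<Longrightarrow> g x \<noteq> 0"
    using ball_avoiding_zero[OF V] by blast
  let ?B = "ball p0 r"
  have B: "x \<in> V" "1 + (\<Sum>m\<in>UNIV. s x $ m * (x $ m - p0 $ m)) \<noteq> 0"
    "?H x $ a $ e \<noteq> 0" "det (Cbp C b x) \<noteq> 0" if "x \<in> ?B" for x
    using r that by (auto simp: g_def)
  have dmat_H: "dmat k ?H x = (c x $ k + 2 * s x $ k) *\<^sub>R ?H x" if x: "x \<in> ?B" for x k
  proof -
    have "Cbp C b x *v s x = - b"
      unfolding C_def b_def using r(1) x B ds riccati
      by (auto intro!: Cbp_mult_riccati_solution[of ?B])
    then show ?thesis
      using cov_deriv_proportional_iff[where s = s, OF dF[OF B(1)[OF x]]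
          invertible_det_nz[THEN iffD2, OF B(4)[OF x]]] cov[OF B(1)[OF x]] by blast
  qed
  define \<kappa> where "\<kappa> x = ?H x $ a $ e / ?H p0 $ a $ e" for x
  have "?H x = \<kappa> x *\<^sub>R ?H p0" if "x \<in> ?B" for x
    unfolding \<kappa>_def using r(1) that dF B dmat_H
    by (intro proportional_if_dmat_proportional[of ?B]) (auto intro: differentiable_congruent_coeff_entry)
  moreover have "det (block_mat C b (- p0) 1) = 1"
    unfolding C_def b_def by (rule det_block_mat_unimodular)
  ultimately show ?thesis
    using r(1,2) B(4) by (intro linearizable_near_if_congruent_coeff_proportional[of ?B]) auto
qed

lemma linearizable_near_mono:
  assumes "linearizable_near F V p0" "V \<subseteq> U"
  shows "linearizable_near F U p0"
proof -
  from assms(1) obtain W where W: "open W \<and> p0 \<in> W \<and> W \<subseteq> V \<and>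
      (\<exists>C b c \<beta>. det (block_mat C b c \<beta>) = 1 \<and>
        (\<exists>A \<mu>. \<forall>p\<in>W. det (Cbp C b p) \<noteq> 0 \<and> transf_coeff C b (F p) p = \<mu> p *\<^sub>R A))"
    unfolding linearizable_near_def ..
  moreover from W assms(2) have "W \<subseteq> U" by blast
  ultimately show ?thesis unfolding linearizable_near_def by (intro exI[of _ W]) simp
qed

theorem mainTheorem6:
  fixes F :: "real^'n \<Rightarrow> real^'n^'n" and U :: "(real^'n) set" and p0 :: "real^'n"
  assumes "CARD('n) \<ge> 2"
    and "open U"
    and "\<And>i j. smooth_fun_on (\<lambda>p. F p $ i $ j) U"
    and "\<And>p. p \<in> U \<Longrightarrow> transpose (F p) = F p"
    and "\<And>p. p \<in> U \<Longrightarrow> det (F p) \<noteq> 0"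
    and "p0 \<in> U"
  shows "linearizable_near F U p0 \<longleftrightarrow>
    (\<exists>V. open V \<and> p0 \<in> V \<and> V \<subseteq> U \<and>
      (\<exists>s :: real^'n \<Rightarrow> real^'n. (\<forall>k. smooth_fun_on (\<lambda>p. s p $ k) V) \<and>
         (\<forall>p\<in>V. \<forall>i j k l. curv s p i j k l = 0) \<and>
         (\<exists>c :: real^'n \<Rightarrow> real^'n. \<forall>p\<in>V. \<forall>k i j.
            cov_deriv s F p k i j = c p $ k * F p $ i $ j)))"
    (is "_ \<longleftrightarrow> (\<exists>V. open V \<and> p0 \<in> V \<and> V \<subseteq> U \<and> ?flat V)")
proof -
  have dF: "(\<lambda>q. F q $ i $ j) differentiable at p" if "p \<in> U" for p i j
    using smooth_fun_on_imp_differentiable[OF assms(3) that] .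
  show ?thesis
  proof
    assume "linearizable_near F U p0"
    then obtain V C b \<mu> A where V: "open V" "p0 \<in> V" "V \<subseteq> U"
      and "\<forall>p\<in>V. det (Cbp C b p) \<noteq> 0 \<and> transf_coeff C b (F p) p = \<mu> p *\<^sub>R A"
      unfolding linearizable_near_def by blast
    then have "?flat V"
      by (intro flat_if_linearizable[OF V(1) dF[OF subsetD[OF V(3)]] assms(5)[OF subsetD[OF V(3)]]]) auto
    with V show "\<exists>V. open V \<and> p0 \<in> V \<and> V \<subseteq> U \<and> ?flat V" by blast
  next
    assume "\<exists>V. open V \<and> p0 \<in> V \<and> V \<subseteq> U \<and> ?flat V"
    then obtain V s c where V: "open V" "p0 \<in> V" "V \<subseteq> U"
      and smooth: "\<forall>k. smooth_fun_on (\<lambda>p. s p $ k) V"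
      and flat: "\<forall>p\<in>V. \<forall>i j k l. curv s p i j k l = 0"
      and cov: "\<forall>p\<in>V. \<forall>k i j. cov_deriv s F p k i j = c p $ k * F p $ i $ j"
      by blast
    have ds: "(\<lambda>q. s q $ k) differentiable at p" if "p \<in> V" for p k
      using smooth_fun_on_imp_differentiable smooth that by blast
    have riccati: "pd j (\<lambda>q. s q $ k) p = s p $ j * s p $ k" if "p \<in> V" for p j k
      using riccati_if_curv_eq_zero[OF assms(1)] ds flat that by blast
    have "linearizable_near F V p0"
      by (rule linearizable_if_riccati[OF V(1,2) dF[OF subsetD[OF V(3)]]
            assms(5)[OF subsetD[OF V(3)]] ds riccati cov[rule_format]])
    then show "linearizable_near F U p0" using V(3) by (rule linearizable_near_mono)
  qed
qed

end
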